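(* Let $\rho_1\in(0,1)$, $\rho_2\in(0,1-\rho_1)$. In a sample $\eta$ of $\mu^{\rho_1,\rho_2}$ there exists, with probability $1$, a site $i\in\mathbb{Z}$ with $\eta(i)=2$ (a second class particle).
   Context: $\mu^{\rho_1,\rho_2}$ (queueing construction): let $(a(i))_{i\in\mathbb{Z}}$, $(s(i))_{i\in\mathbb{Z}}$ be independent families of i.i.d. Bernoulli variables with parameters $\rho_1$ and $\rho_1+\rho_2$; $\mathcal{A}_{[i,j]}=\sum_{k=i}^ja(k)$, $\mathcal{S}_{[i,j]}=\sum_{k=i}^js(k)$ (empty sums $0$); $Q_i=\sup_{j\ge i-1}(\mathcal{A}_{[i,j]}-\mathcal{S}_{[i,j]})$; $d(i)=1$ iff $s(i)=1$ and ($a(i)=1$ or $Q_{i+1}\ge1$) (equivalently, each $i$ with $a(i)=1$ is matched to the largest $j\le i$ with $s(j)=1$ not yet matched, and $d=1$ at matched sites). Set $\eta(i)=1$ if $d(i)=1$, $\eta(i)=2$ if $s(i)=1,d(i)=0$, $\eta(i)=+\infty$ if $s(i)=0$; $\mu^{\rho_1,\rho_2}$ is the law of $\eta$. *)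

theory Defs
  imports "HOL-Probability.Probability" "HOL-Library.Extended_Nat"
begin

text \<open>Queueing construction of the two-type measure. Arrivals a and services s are
  Bernoulli variables encoded as booleans (True = 1).\<close>

definition cnt :: "(int \<Rightarrow> bool) \<Rightarrow> int \<Rightarrow> int \<Rightarrow> int" where
  "cnt x i j = (\<Sum>k\<in>{i..j}. of_bool (x k))"

definition queueQ :: "(int \<Rightarrow> bool) \<Rightarrow> (int \<Rightarrow> bool) \<Rightarrow> int \<Rightarrow> ereal" where
  "queueQ a s i = (SUP j\<in>{i - 1..}. ereal (of_int (cnt a i j - cnt s i j)))"

definition departure :: "(int \<Rightarrow> bool) \<Rightarrow> (int \<Rightarrow> bool) \<Rightarrow> int \<Rightarrow> bool" where
  "departure a s i \<longleftrightarrow> s i \<and> (a i \<or> queueQ a s (i + 1) \<ge> 1)"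

definition config :: "(int \<Rightarrow> bool) \<Rightarrow> (int \<Rightarrow> bool) \<Rightarrow> int \<Rightarrow> enat" where
  "config a s i = (if departure a s i then 1 else if s i then 2 else \<infinity>)"

definition arr_serv :: "('w \<Rightarrow> int \<Rightarrow> bool) \<Rightarrow> ('w \<Rightarrow> int \<Rightarrow> bool) \<Rightarrow> int + int \<Rightarrow> 'w \<Rightarrow> bool" where
  "arr_serv a s k = (case k of Inl i \<Rightarrow> (\<lambda>w. a w i) | Inr i \<Rightarrow> (\<lambda>w. s w i))"

end

theory Submission
  imports Defs
begin

text \<open>
  Let \<open>W n = \<S>[1,n] - \<A>[1,n]\<close> be the surplus of services over arrivals in \<open>[1, n]\<close>.
  Its increments have mean \<open>\<rho>\<^sub>2 > 0\<close>, so by Hoeffding's inequality and Borel--Cantelli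
  almost surely \<open>W n > 0\<close> for all large \<open>n\<close>. Since \<open>W 0 = 0\<close>, the walk then has a last
  minimum at some \<open>n\<close>. The next step is an up-step, i.e. a service and no arrival at
  \<open>i = n + 1\<close>, and the walk never returns below \<open>W i\<close>, i.e. services keep up with
  arrivals after \<open>i\<close>: the queue \<open>Q\<^sub>i\<^sub>+\<^sub>1\<close> is empty, so the service at \<open>i\<close> is unused
  and \<open>\<eta>(i) = 2\<close>.
\<close>

lemma cnt_split:
  assumes "lo \<le> i + 1" "i \<le> j"
  shows "cnt x lo j = cnt x lo i + cnt x (i + 1) j"
proof -
  have "{lo..j} = {lo..i} \<union> {i + 1..j}" "{lo..i} \<inter> {i + 1..j} = {}"
    using assms by auto
  then show ?thesis
    unfolding cnt_def by (metis finite_atLeastAtMost_int sum.union_disjoint)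
qed

lemma cnt_empty: "j < i \<Longrightarrow> cnt x i j = 0"
  unfolding cnt_def by simp

lemma cnt_snoc:
  assumes "i \<le> j + 1"
  shows "cnt x i (j + 1) = cnt x i j + of_bool (x (j + 1))"
  using cnt_split[of i j "j + 1" x] assms by (simp add: cnt_def)

lemma config_eq_2I:
  assumes "s i" "\<not> a i"
    and keeps_up: "\<And>j. i \<le> j \<Longrightarrow> cnt a (i + 1) j \<le> cnt s (i + 1) j"
  shows "config a s i = 2"
proof -
  have "queueQ a s (i + 1) \<le> 0"
    unfolding queueQ_def using keeps_up by (intro SUP_least) auto
  then have "\<not> departure a s i"
    unfolding departure_def using \<open>\<not> a i\<close> by (auto dest: order.trans)
  then show ?thesis
    unfolding config_def using \<open>s i\<close> by simp
qed

lemma eventually_greater_imp_last_minimum: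
  fixes W :: "nat \<Rightarrow> 'a::linorder"
  assumes "eventually (\<lambda>n. W 0 < W n) sequentially"
  shows "\<exists>n. \<forall>k>n. W n < W k"
proof -
  obtain N where N: "\<And>k. N \<le> k \<Longrightarrow> W 0 < W k"
    using assms unfolding eventually_sequentially by blast
  define m where "m = Min (W ` {..N})"
  define n where "n = Max {k \<in> {..N}. W k = m}"
  have m_le: "m \<le> W k" if "k \<le> N" for k
    unfolding m_def using that by simp
  have "m \<in> W ` {..N}"
    unfolding m_def by (intro Min_in) auto
  then have "n \<in> {k \<in> {..N}. W k = m}"
    unfolding n_def by (intro Max_in) auto
  then have "n \<le> N" "W n = m" by auto
  have "W n < W k" if "n < k" for k
  proof (cases "k \<le> N")
    case True
    have "W k \<noteq> m"
    proof
      assume "W k = m"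
      then have "k \<le> n"
        unfolding n_def using True by (intro Max_ge) auto
      with \<open>n < k\<close> show False by simp
    qed
    with m_le[OF True] \<open>W n = m\<close> show ?thesis by simp
  next
    case False
    then have "W 0 < W k"
      by (intro N) simp
    with m_le[of 0] \<open>W n = m\<close> show ?thesis by simp
  qed
  then show ?thesis by blast
qed

lemma exists_second_class_if_eventually_more_services:
  assumes "eventually (\<lambda>n. cnt a 1 (int n) < cnt s 1 (int n)) sequentially"
  shows "\<exists>i. config a s i = 2"
proof -
  define W where "W n = cnt s 1 (int n) - cnt a 1 (int n)" for n
  have "W 0 = 0"
    unfolding W_def by (simp add: cnt_empty)
  with assms obtain n where last_min: "\<And>k. n < k \<Longrightarrow> W n < W k"
    using eventually_greater_imp_last_minimum[of W] unfolding W_def by force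
  define i where "i = int n + 1"
  have W_Suc: "W (Suc n) = W n + of_bool (s i) - of_bool (a i)"
    using cnt_snoc[of 1 "int n" s] cnt_snoc[of 1 "int n" a]
    unfolding W_def i_def by (simp add: ac_simps)
  with last_min[of "Suc n"] have "s i" "\<not> a i" "W (Suc n) = W n + 1"
    by (auto split: if_splits)
  moreover have "cnt a (i + 1) j \<le> cnt s (i + 1) j" if "i \<le> j" for j
  proof -
    have "n < nat j"
      using that i_def by simp
    then have "W (Suc n) \<le> W (nat j)"
      using last_min[of "nat j"] \<open>W (Suc n) = W n + 1\<close> by simp
    moreover have "W (nat j) = W (Suc n) + cnt s (i + 1) j - cnt a (i + 1) j"
      using that cnt_split[of 1 i j s] cnt_split[of 1 i j a]
      unfolding W_def i_def by (simp add: add.commute)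
    ultimately show ?thesis by simp
  qed
  ultimately show ?thesis
    using config_eq_2I by blast
qed

lemma measurable_cnt:
  assumes "\<And>k. (\<lambda>w. x w k) \<in> M \<rightarrow>\<^sub>M count_space UNIV"
  shows "(\<lambda>w. real_of_int (cnt (x w) i j)) \<in> borel_measurable M"
proof -
  have [measurable]: "(\<lambda>w. of_bool (x w k) :: real) \<in> borel_measurable M" for k
    using measurable_compose[OF assms[of k], of "\<lambda>b. of_bool b :: real" borel] by simp
  show ?thesis
    unfolding cnt_def of_int_sum of_int_of_bool by measurable
qed

lemma (in prob_space) measurable_arr_serv:
  assumes "indep_vars (\<lambda>_. count_space UNIV) (arr_serv a s) UNIV"
  shows "(\<lambda>w. a w i) \<in> M \<rightarrow>\<^sub>M count_space UNIV"
    and "(\<lambda>w. s w i) \<in> M \<rightarrow>\<^sub>M count_space UNIV"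
proof -
  have "arr_serv a s k \<in> M \<rightarrow>\<^sub>M count_space UNIV" for k
    using assms unfolding indep_vars_def by blast
  from this[of "Inl i"] this[of "Inr i"]
  show "(\<lambda>w. a w i) \<in> M \<rightarrow>\<^sub>M count_space UNIV" "(\<lambda>w. s w i) \<in> M \<rightarrow>\<^sub>M count_space UNIV"
    by (simp_all add: arr_serv_def)
qed

lemma (in prob_space) expectation_of_bool:
  "expectation (\<lambda>w. of_bool (P w) :: real) = prob {w \<in> space M. P w}"
proof -
  have "expectation (\<lambda>w. of_bool (P w) :: real) = expectation (indicator {w \<in> space M. P w})"
    by (intro Bochner_Integration.integral_cong) (auto simp: indicator_def)
  also have "\<dots> = prob {w \<in> space M. P w}"
    by (simp add: Int_absorb2)
  finally show ?thesis .
qed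

lemma (in prob_space) Hoeffding_cnt_le:
  assumes indep: "indep_vars (\<lambda>_. count_space UNIV) (arr_serv a s) UNIV"
    and prob_a: "\<And>i. prob {w \<in> space M. a w i} = p"
    and prob_s: "\<And>i. prob {w \<in> space M. s w i} = q"
    and "0 \<le> \<epsilon>"
  shows "prob {w \<in> space M. real_of_int (cnt (s w) 1 (int n) - cnt (a w) 1 (int n))
                              \<le> real n * (q - p - \<epsilon>)} \<le> exp (- \<epsilon>\<^sup>2 * real n)"
proof (cases "n = 0")
  case False
  define Y :: "int + int \<Rightarrow> 'a \<Rightarrow> real" where
    "Y k w = (case k of Inl _ \<Rightarrow> - of_bool (arr_serv a s k w)
                      | Inr _ \<Rightarrow> of_bool (arr_serv a s k w))" for k w
  define lo :: "int + int \<Rightarrow> real" where "lo k = (case k of Inl _ \<Rightarrow> -1 | Inr _ \<Rightarrow> 0)" for k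
  define hi :: "int + int \<Rightarrow> real" where "hi k = (case k of Inl _ \<Rightarrow> 0 | Inr _ \<Rightarrow> 1)" for k
  define I where "I = Inl ` {1..int n} \<union> Inr ` {1..int n}"
  have sum_I: "(\<Sum>k\<in>I. g k) = (\<Sum>i\<in>{1..int n}. g (Inl i)) + (\<Sum>i\<in>{1..int n}. g (Inr i))"
    for g :: "int + int \<Rightarrow> real"
    unfolding I_def by (subst sum.union_disjoint) (auto simp: sum.reindex)
  have sum_Y: "(\<Sum>k\<in>I. Y k w) = real_of_int (cnt (s w) 1 (int n) - cnt (a w) 1 (int n))" for w
    unfolding sum_I cnt_def by (simp add: Y_def arr_serv_def sum_negf)
  interpret Hoeffding_ineq M I Y lo hi "real n * (q - p)"
  proof unfold_locales
    show "finite I" unfolding I_def by simp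
    have "indep_vars (\<lambda>_. borel) Y UNIV"
      unfolding Y_def by (rule indep_vars_compose2[OF indep]) (auto split: sum.splits)
    then show "indep_vars (\<lambda>_. borel) Y I"
      by (rule indep_vars_subset) auto
    show "AE x in M. Y k x \<in> {lo k..hi k}" if "k \<in> I" for k
      by (auto simp: Y_def lo_def hi_def split: sum.splits)
    have "Y (Inl i) = (\<lambda>w. - of_bool (a w i))" "Y (Inr i) = (\<lambda>w. of_bool (s w i))" for i
      by (simp_all add: fun_eq_iff Y_def arr_serv_def)
    then have "expectation (Y (Inl i)) = - p" "expectation (Y (Inr i)) = q" for i
      by (simp_all add: expectation_of_bool prob_a prob_s)
    then show "real n * (q - p) \<equiv> \<Sum>k\<in>I. expectation (Y k)"
      unfolding sum_I by (simp add: algebra_simps)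
  qed
  have ranges: "(\<Sum>k\<in>I. (hi k - lo k)\<^sup>2) = 2 * real n"
    unfolding sum_I by (simp add: lo_def hi_def)
  have "prob {w \<in> space M. real_of_int (cnt (s w) 1 (int n) - cnt (a w) 1 (int n))
                             \<le> real n * (q - p - \<epsilon>)}
        = prob {w \<in> space M. (\<Sum>k\<in>I. Y k w) \<le> real n * (q - p) - real n * \<epsilon>}"
    unfolding sum_Y by (simp add: algebra_simps)
  also have "\<dots> \<le> exp (-2 * (real n * \<epsilon>)\<^sup>2 / (\<Sum>k\<in>I. (hi k - lo k)\<^sup>2))"
    using \<open>0 \<le> \<epsilon>\<close> False ranges by (intro Hoeffding_ineq_le) auto
  also have "\<dots> = exp (- \<epsilon>\<^sup>2 * real n)"
    unfolding ranges using False by (simp add: field_simps power2_eq_square)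
  finally show ?thesis .
qed simp

lemma (in prob_space) AE_eventually_notin_if_prob_le_exp:
  assumes "\<And>n. A n \<in> events" "\<And>n. prob (A n) \<le> exp (- c * real n)" "0 < c"
  shows "AE w in M. eventually (\<lambda>n. w \<notin> A n) sequentially"
proof -
  have "summable (\<lambda>n. prob (A n))"
  proof (rule summable_comparison_test)
    show "\<exists>N. \<forall>n\<ge>N. norm (prob (A n)) \<le> exp (- c) ^ n"
      using assms(2) by (simp add: exp_of_nat_mult[symmetric] mult.commute)
    show "summable (\<lambda>n. exp (- c) ^ n)"
      using \<open>0 < c\<close> by (intro summable_geometric) simp
  qed
  then have "AE w in M. eventually (\<lambda>n. w \<in> space M - A n) sequentially"
    using assms(1) by (intro borel_cantelli_AE1) (auto simp: less_top[symmetric])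
  then show ?thesis
    by (rule AE_mp) (auto elim: eventually_mono)
qed

lemma (in prob_space) AE_eventually_more_services:
  assumes indep: "indep_vars (\<lambda>_. count_space UNIV) (arr_serv a s) UNIV"
    and prob_a: "\<And>i. prob {w \<in> space M. a w i} = p"
    and prob_s: "\<And>i. prob {w \<in> space M. s w i} = q"
    and "p < q"
  shows "AE w in M. eventually (\<lambda>n. cnt (a w) 1 (int n) < cnt (s w) 1 (int n)) sequentially"
proof -
  define \<epsilon> where "\<epsilon> = (q - p) / 2"
  define A where "A n = {w \<in> space M. real_of_int (cnt (s w) 1 (int n) - cnt (a w) 1 (int n))
                                       \<le> real n * (q - p - \<epsilon>)}" for n
  have [measurable]: "(\<lambda>w. real_of_int (cnt (x w) 1 (int n))) \<in> borel_measurable M"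
    if "x = a \<or> x = s" for x n
    using that measurable_arr_serv[OF indep] by (auto intro: measurable_cnt)
  have "A n \<in> events" for n
    unfolding A_def of_int_diff by measurable
  moreover have "prob (A n) \<le> exp (- \<epsilon>\<^sup>2 * real n)" for n
    unfolding A_def using \<open>p < q\<close>
    by (intro Hoeffding_cnt_le[OF indep prob_a prob_s]) (simp add: \<epsilon>_def)
  ultimately have eventually_outside: "AE w in M. eventually (\<lambda>n. w \<notin> A n) sequentially"
    by (rule AE_eventually_notin_if_prob_le_exp) (use \<open>p < q\<close> in \<open>simp add: \<epsilon>_def\<close>)
  have outside_imp_more: "cnt (a w) 1 (int n) < cnt (s w) 1 (int n)"
    if "w \<in> space M" "w \<notin> A n" for w n
  proof -
    have "real n * (q - p - \<epsilon>) < real_of_int (cnt (s w) 1 (int n) - cnt (a w) 1 (int n))"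
      using that unfolding A_def by simp
    moreover have "0 \<le> real n * (q - p - \<epsilon>)"
      using \<open>p < q\<close> by (simp add: \<epsilon>_def)
    ultimately show ?thesis
      by linarith
  qed
  from AE_space eventually_outside show ?thesis
  proof eventually_elim
    case (elim w)
    from elim(2) show ?case
      by (rule eventually_mono) (rule outside_imp_more[OF elim(1)])
  qed
qed

theorem lemmaC1:
  fixes M :: "'w measure" and a s :: "'w \<Rightarrow> int \<Rightarrow> bool" and \<rho>1 \<rho>2 :: real
  assumes "prob_space M"
    and "0 < \<rho>1" "\<rho>1 < 1" "0 < \<rho>2" "\<rho>2 < 1 - \<rho>1"
    and "prob_space.indep_vars M (\<lambda>_. count_space UNIV) (arr_serv a s) UNIV"
    and "\<And>i. measure M {w \<in> space M. a w i} = \<rho>1"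
    and "\<And>i. measure M {w \<in> space M. s w i} = \<rho>1 + \<rho>2"
  shows "AE w in M. \<exists>i. config (a w) (s w) i = 2"
proof -
  interpret prob_space M by fact
  have "AE w in M. eventually (\<lambda>n. cnt (a w) 1 (int n) < cnt (s w) 1 (int n)) sequentially"
    by (rule AE_eventually_more_services[OF assms(6-8)]) (use \<open>0 < \<rho>2\<close> in simp)
  then show ?thesis
    by (rule AE_mp) (auto intro: exists_second_class_if_eventually_more_services)
qed

end
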